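(* On $\mathbb{R}^k\times\mathbb{T}^n$ with coordinates $(x,\theta)=(x_1,\dots,x_k,\theta_1,\dots,\theta_n)$ consider the vector field $X=\xi+T$, where $\xi=\sum_{j=1}^k x_j\,\partial/\partial x_j$ and $T=\sum_{r=1}^n a_r\,\partial/\partial\theta_r$ with $a_1,\dots,a_n\in\mathbb{R}$ rationally independent. Then the set $\mathcal{L}_X$ of all smooth vector fields on $\mathbb{R}^k\times\mathbb{T}^n$ which commute with $X$ is a Lie algebra of dimension $k^2+n$ with basis $$\left\{ x_j\frac{\partial}{\partial x_\lambda},\ \frac{\partial}{\partial\theta_r}\right\},\quad j,\lambda=1,\dots,k;\ r=1,\dots,n.$$
   Context: A vector field $T=\sum_r a_r\partial/\partial\theta_r$ with constant coefficients on $\mathbb{T}^n$ is called affine; it is called dense when $a_1,\dots,a_n$ are rationally independent (equivalently its trajectories are dense). *)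

theory Defs
  imports "HOL-Analysis.Analysis"
begin

text \<open>Points of R^k x T^n are represented by their lifts (x, theta) in R^k x R^n;
  the torus is R^n / Z^n (period 1 in each angle coordinate). A vector field on
  R^k x T^n is a map Y : R^k x R^n -> R^k x R^n that is Z^n-periodic in theta.\<close>

type_synonym ('k, 'n) pt = "(real^'k) \<times> (real^'n)"
type_synonym ('k, 'n) vf = "('k, 'n) pt \<Rightarrow> ('k, 'n) pt"

coinductive smooth_fun :: "('a::euclidean_space \<Rightarrow> real) \<Rightarrow> bool" where
  "(\<forall>x. f differentiable (at x)) \<Longrightarrow>
   (\<forall>i\<in>Basis. smooth_fun (\<lambda>x. frechet_derivative f (at x) i)) \<Longrightarrow> smooth_fun f"

definition smooth_map :: "('a::euclidean_space \<Rightarrow> 'b::euclidean_space) \<Rightarrow> bool" where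
  "smooth_map f \<longleftrightarrow> (\<forall>b\<in>Basis. smooth_fun (\<lambda>x. f x \<bullet> b))"

definition torus_periodic :: "('k::finite, 'n::finite) vf \<Rightarrow> bool" where
  "torus_periodic Y \<longleftrightarrow> (\<forall>x \<theta> r. Y (x, \<theta> + axis r 1) = Y (x, \<theta>))"

definition smooth_vf :: "('k::finite, 'n::finite) vf \<Rightarrow> bool" where
  "smooth_vf Y \<longleftrightarrow> smooth_map Y \<and> torus_periodic Y"

definition lie_bracket :: "('a::euclidean_space \<Rightarrow> 'a) \<Rightarrow> ('a \<Rightarrow> 'a) \<Rightarrow> 'a \<Rightarrow> 'a" where
  "lie_bracket Y Z p = frechet_derivative Z (at p) (Y p) - frechet_derivative Y (at p) (Z p)"

text \<open>The vector field X = sum x_j d/dx_j + sum a_r d/dtheta_r.\<close>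
definition Xfield :: "real^'n \<Rightarrow> ('k::finite, 'n::finite) vf" where
  "Xfield a = (\<lambda>(x, \<theta>). (x, a))"

definition LX :: "real^'n \<Rightarrow> ('k::finite, 'n::finite) vf set" where
  "LX a = {Y. smooth_vf Y \<and> lie_bracket (Xfield a) Y = (\<lambda>p. 0)}"

definition rationally_independent :: "real^'n::finite \<Rightarrow> bool" where
  "rationally_independent a \<longleftrightarrow>
     (\<forall>q::'n \<Rightarrow> real. (\<forall>r. q r \<in> \<rat>) \<longrightarrow> (\<Sum>r\<in>UNIV. q r * a $ r) = 0 \<longrightarrow> (\<forall>r. q r = 0))"

text \<open>The proposed basis: Inl (j, l) is x_j d/dx_l, Inr r is d/dtheta_r.\<close>
fun basis_vf :: "('k \<times> 'k) + 'n \<Rightarrow> ('k::finite, 'n::finite) vf" where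
  "basis_vf (Inl (j, l)) = (\<lambda>(x, \<theta>). (axis l (x $ j), 0))"
| "basis_vf (Inr r) = (\<lambda>(x, \<theta>). (0, axis r 1))"

definition lin_comb :: "(('k \<times> 'k) + 'n \<Rightarrow> real) \<Rightarrow> ('k::finite, 'n::finite) vf" where
  "lin_comb c = (\<lambda>p. \<Sum>i\<in>UNIV. c i *\<^sub>R basis_vf i p)"

end

theory Submission
  imports Defs
begin

(* The flow of X is (x, \<theta>) \<mapsto> (e^t x, \<theta> + t a), and Y commutes with X exactly when Y is
   equivariant under it: Y(e^t x, \<theta> + t a) = (e^t Y_x(x, \<theta>), Y_\<theta>(x, \<theta>)).
   By Dirichlet's theorem the angle \<theta> + t a returns arbitrarily close to \<theta> modulo Z^n for
   arbitrarily large and arbitrarily negative t. Returns with t \<rightarrow> +\<infinity> force Y_x(0, \<theta>) = 0;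
   returns with t \<rightarrow> -\<infinity> bring (e^t x, \<theta> + t a) close to (0, \<theta>), so Y_\<theta> does not depend on x,
   and the mean value theorem on the segment from 0 to e^t x identifies Y_x(x, \<theta>) with the
   derivative of Y_x at (0, \<theta>) in direction x, which is linear in x. Equivariance then says that
   \<theta> \<mapsto> Y(x, \<theta>) is invariant under the linear flow \<theta> + t a, whose orbits are dense by Kronecker's
   theorem, so Y(x, \<theta>) = (M x, w). Such fields form the span of the proposed basis and are closed
   under the bracket [(A x, u), (B x, w)] = ((B A - A B) x, 0). *)

section \<open>The linear flow on the torus\<close>

definition int_vec :: "real^'n::finite \<Rightarrow> bool" where
  "int_vec m \<longleftrightarrow> (\<forall>r. m $ r \<in> \<int>)"

lemma int_vec_of_int: "int_vec (\<chi> r. of_int (h r))"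
  by (simp add: int_vec_def)

lemma int_vec_uminus: "int_vec m \<Longrightarrow> int_vec (- m)"
  by (simp add: int_vec_def)

lemma norm_lt_if_components_lt:
  fixes v :: "real^'n::finite"
  assumes "\<And>r. \<bar>v $ r\<bar> < \<epsilon> / CARD('n)"
  shows "norm v < \<epsilon>"
proof -
  have "norm v \<le> (\<Sum>r\<in>UNIV. \<bar>v $ r\<bar>)" by (rule norm_le_l1_cart)
  also have "\<dots> < (\<Sum>r\<in>(UNIV::'n set). \<epsilon> / CARD('n))"
    by (rule sum_strict_mono) (use assms in auto)
  also have "\<dots> = \<epsilon>" by simp
  finally show ?thesis .
qed

lemma enumerate_finite_UNIV:
  "\<exists>(e :: nat \<Rightarrow> 'n::finite) idx.
     inj_on e {..<CARD('n)} \<and> (\<forall>r. idx r < CARD('n)) \<and> (\<forall>r. e (idx r) = r)"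
proof -
  obtain e where e: "bij_betw e {..<CARD('n)} (UNIV::'n set)"
    using ex_bij_betw_nat_finite[of "UNIV::'n set"] by (auto simp: lessThan_atLeast0)
  then show ?thesis
    using inv_into_into[of _ e "{..<CARD('n)}"]
    by (intro exI[of _ e] exI[of _ "inv_into {..<CARD('n)} e"]) (auto simp: bij_betw_def f_inv_into_f)
qed

lemma linear_flow_returns_after:
  fixes a :: "real^'n::finite"
  assumes "\<epsilon> > 0"
  shows "\<exists>t m. t > K \<and> int_vec m \<and> norm (t *\<^sub>R a - m) < \<epsilon>"
proof -
  obtain e :: "nat \<Rightarrow> 'n" and idx
    where e: "\<And>r. idx r < CARD('n)" "\<And>r. e (idx r) = r" "inj_on e {..<CARD('n)}"
    using enumerate_finite_UNIV by blast
  obtain N :: nat where N: "1 / N < \<epsilon> / CARD('n)" "N > 0"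
    using assms real_arch_inverse[of "\<epsilon> / CARD('n)"] by (auto simp: field_simps)
  obtain M :: nat where M: "real M > \<bar>K\<bar>"
    using reals_Archimedean2 by blast
  obtain q p where qp: "0 < q"
    "\<And>i. i < CARD('n) \<Longrightarrow> \<bar>of_int q * (real M * a $ e i) - of_int (p i)\<bar> < 1 / N"
    using Dirichlet_approx_simult[OF N(2), where \<theta>="\<lambda>i. real M * a $ e i" and n="CARD('n)"]
    by blast
  define t where "t = of_int q * real M"
  have "real M \<le> t"
    using qp(1) mult_right_mono[of 1 "real_of_int q" "real M"] by (simp add: t_def)
  then have "t > K" using M by linarith
  moreover have "norm (t *\<^sub>R a - (\<chi> r. of_int (p (idx r)))) < \<epsilon>"
  proof (rule norm_lt_if_components_lt)
    fix r
    have "\<bar>t * a $ r - of_int (p (idx r))\<bar> < 1 / N"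
      using qp(2)[OF e(1)] e(2) by (simp add: t_def mult.assoc)
    then show "\<bar>(t *\<^sub>R a - (\<chi> r. of_int (p (idx r)))) $ r\<bar> < \<epsilon> / CARD('n)"
      using N(1) by simp
  qed
  ultimately show ?thesis using int_vec_of_int[of "\<lambda>r. p (idx r)"] by blast
qed

lemma linear_flow_returns_before:
  fixes a :: "real^'n::finite"
  assumes "\<epsilon> > 0"
  shows "\<exists>t m. t < K \<and> int_vec m \<and> norm (t *\<^sub>R a - m) < \<epsilon>"
proof -
  obtain t m where tm: "t > - K" "int_vec m" "norm (t *\<^sub>R a - m) < \<epsilon>"
    using linear_flow_returns_after[OF assms] by blast
  have "(- t) *\<^sub>R a - (- m) = - (t *\<^sub>R a - m)" by simp
  then have "norm ((- t) *\<^sub>R a - (- m)) < \<epsilon>" using tm(3) by (simp only: norm_minus_cancel)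
  moreover have "- t < K" using tm(1) by simp
  ultimately show ?thesis using int_vec_uminus[OF tm(2)] by (intro exI[of _ "- t"] exI[of _ "- m"] conjI)
qed

lemma linear_flow_return_near_zero_section:
  fixes a :: "real^'n::finite" and x :: "real^'k::finite"
  assumes "\<delta> > 0"
  shows "\<exists>t m. int_vec m \<and> (\<forall>s\<in>{0..exp t}. dist (s *\<^sub>R x, \<theta> + t *\<^sub>R a - m) (0, \<theta>) < \<delta>)"
proof -
  define \<eta> where "\<eta> = \<delta> / (2 * (norm x + 1))"
  have "\<eta> > 0" using assms by (simp add: \<eta>_def add_nonneg_pos)
  obtain t m where tm: "t < ln \<eta>" "int_vec m" "norm (t *\<^sub>R a - m) < \<delta> / 2"
    using linear_flow_returns_before[where \<epsilon>="\<delta> / 2" and K="ln \<eta>" and a=a] assms by auto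
  have "exp t < \<eta>" using tm(1) \<open>\<eta> > 0\<close> by (metis exp_less_cancel_iff exp_ln)
  have "dist (s *\<^sub>R x, \<theta> + t *\<^sub>R a - m) (0, \<theta>) < \<delta>" if s: "s \<in> {0..exp t}" for s
  proof -
    have "norm (s *\<^sub>R x) \<le> \<eta> * norm x"
      using s \<open>exp t < \<eta>\<close> by (auto intro!: mult_right_mono)
    also have "\<dots> = \<delta> / 2 * (norm x / (norm x + 1))"
      by (simp add: \<eta>_def)
    also have "\<dots> < \<delta> / 2 * 1"
      by (rule mult_strict_left_mono) (use assms in \<open>simp_all add: divide_less_eq_1 add_nonneg_pos\<close>)
    finally have "norm (s *\<^sub>R x) < \<delta> / 2" by simp
    moreover have "dist (s *\<^sub>R x, \<theta> + t *\<^sub>R a - m) (0, \<theta>) \<le> norm (s *\<^sub>R x) + norm (t *\<^sub>R a - m)"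
      using norm_Pair_le[of "s *\<^sub>R x" "t *\<^sub>R a - m"] by (simp add: dist_norm)
    ultimately show ?thesis using tm(3) by linarith
  qed
  then show ?thesis using tm(2) by blast
qed

lemma rationally_independent_inj:
  assumes "rationally_independent a"
  shows "inj (($) a)"
proof (rule injI, rule ccontr)
  fix u v assume eq: "a $ u = a $ v" and "u \<noteq> v"
  define q where "q = (\<lambda>r. if r = u then 1 else if r = v then -1 else 0 :: real)"
  have "(\<Sum>r\<in>UNIV. q r * a $ r) = (\<Sum>r\<in>UNIV. (if r = u then a $ r else 0) - (if r = v then a $ r else 0))"
    by (rule sum.cong) (use \<open>u \<noteq> v\<close> in \<open>auto simp: q_def\<close>)
  also have "\<dots> = 0" using eq by (simp add: sum_subtractf)
  finally have "(\<Sum>r\<in>UNIV. q r * a $ r) = 0" .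
  moreover have "\<forall>r. q r \<in> \<rat>" by (simp add: q_def)
  ultimately have "q u = 0" using assms unfolding rationally_independent_def by blast
  with \<open>u \<noteq> v\<close> show False by (simp add: q_def)
qed

lemma rationally_independent_int_independent:
  fixes a :: "real^'n::finite"
  assumes ri: "rationally_independent a" and V: "V \<subseteq> range (($) a)"
  shows "module.independent (\<lambda>r. (*) (real_of_int r)) V"
proof -
  interpret M: Modules.module "\<lambda>r. (*) (real_of_int r)"
    by (simp add: Modules.module.intro distrib_left mult.commute)
  have inj: "inj (($) a)" by (rule rationally_independent_inj[OF ri])
  show ?thesis
    unfolding M.independent_explicit_module
  proof (intro allI impI)
    fix T u v
    assume T: "finite T" "T \<subseteq> V" "(\<Sum>v\<in>T. real_of_int (u v) * v) = 0" "v \<in> T"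
    define q where "q = (\<lambda>r. if a $ r \<in> T then real_of_int (u (a $ r)) else 0)"
    have "(\<Sum>r\<in>UNIV. q r * a $ r)
        = (\<Sum>r\<in>UNIV. if a $ r \<in> T then real_of_int (u (a $ r)) * a $ r else 0)"
      by (rule sum.cong) (auto simp: q_def)
    also have "\<dots> = (\<Sum>r\<in>{r. a $ r \<in> T}. real_of_int (u (a $ r)) * a $ r)"
      by (simp add: sum.If_cases)
    also have "\<dots> = (\<Sum>v\<in>($) a ` {r. a $ r \<in> T}. real_of_int (u v) * v)"
      by (subst sum.reindex) (use inj in \<open>auto simp: inj_on_def\<close>)
    also have "($) a ` {r. a $ r \<in> T} = T" using T(2) V by auto
    finally have "(\<Sum>r\<in>UNIV. q r * a $ r) = 0" using T(3) by simp
    moreover have "\<forall>r. q r \<in> \<rat>" by (simp add: q_def)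
    ultimately have q0: "\<forall>r. q r = 0" using ri unfolding rationally_independent_def by blast
    obtain r where r: "v = a $ r" using T(2,4) V by auto
    then show "u v = 0" using q0[rule_format, of r] T(4) by (simp add: q_def)
  qed
qed

lemma linear_flow_dense:
  fixes a \<beta> :: "real^'n::finite"
  assumes ri: "rationally_independent a" and "\<epsilon> > 0"
  shows "\<exists>t m. int_vec m \<and> norm (t *\<^sub>R a - m - \<beta>) < \<epsilon>"
proof -
  obtain e :: "nat \<Rightarrow> 'n" and idx
    where e: "inj_on e {..<CARD('n)}" "\<And>r. idx r < CARD('n)" "\<And>r. e (idx r) = r"
    using enumerate_finite_UNIV by blast
  have inj: "inj_on (\<lambda>i. a $ e i) {..<CARD('n)}"
    using comp_inj_on[OF e(1) inj_on_subset[OF rationally_independent_inj[OF ri] subset_UNIV]]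
    by (simp add: o_def)
  have indep: "module.independent (\<lambda>r. (*) (real_of_int r)) ((\<lambda>i. a $ e i) ` {..<CARD('n)})"
    by (rule rationally_independent_int_independent[OF ri]) auto
  have "\<epsilon> / CARD('n) > 0" using assms(2) by simp
  then obtain t h where th:
    "\<And>i. i < CARD('n) \<Longrightarrow> \<bar>t * a $ e i - of_int (h i) - \<beta> $ e i\<bar> < \<epsilon> / CARD('n)"
    using Kronecker_thm_1[OF indep inj, where \<alpha>="\<lambda>i. \<beta> $ e i"] by blast
  have "norm (t *\<^sub>R a - (\<chi> r. of_int (h (idx r))) - \<beta>) < \<epsilon>"
    by (rule norm_lt_if_components_lt) (use th[OF e(2)] e(3) in simp)
  then show ?thesis using int_vec_of_int[of "\<lambda>r. h (idx r)"] by blast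
qed

lemma isCont_eq_if_attained_nearby:
  fixes f :: "'a::metric_space \<Rightarrow> 'b::metric_space"
  assumes "isCont f p\<^sub>0" and "\<And>\<delta>. \<delta> > 0 \<Longrightarrow> \<exists>p. dist p p\<^sub>0 < \<delta> \<and> f p = c"
  shows "c = f p\<^sub>0"
proof (rule ccontr)
  assume "c \<noteq> f p\<^sub>0"
  then obtain \<delta> where "\<delta> > 0" "\<And>p. dist p p\<^sub>0 < \<delta> \<Longrightarrow> dist (f p) (f p\<^sub>0) < dist c (f p\<^sub>0)"
    using assms(1) unfolding continuous_at_eps_delta by (metis zero_less_dist_iff)
  with assms(2) show False by fastforce
qed

lemma linear_flow_invariant_const:
  fixes f :: "real^'n::finite \<Rightarrow> 'b::metric_space"
  assumes ri: "rationally_independent a" and cont: "\<And>\<theta>. isCont f \<theta>"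
    and periodic: "\<And>\<theta> m. int_vec m \<Longrightarrow> f (\<theta> - m) = f \<theta>"
    and invariant: "\<And>\<theta> t. f (\<theta> + t *\<^sub>R a) = f \<theta>"
  shows "f \<theta> = f 0"
proof (rule isCont_eq_if_attained_nearby[OF cont, symmetric])
  fix \<delta> :: real assume "\<delta> > 0"
  then obtain t m where "int_vec m" "norm (t *\<^sub>R a - m - \<theta>) < \<delta>"
    using linear_flow_dense[OF ri] by blast
  moreover have "f (t *\<^sub>R a - m) = f 0"
    using periodic[OF \<open>int_vec m\<close>, of "t *\<^sub>R a"] invariant[of 0 t] by simp
  ultimately show "\<exists>p. dist p \<theta> < \<delta> \<and> f p = f 0" by (auto simp: dist_norm)
qed

lemma torus_periodic_int_multiple:
  assumes "torus_periodic Y"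
  shows "Y (x, \<theta> + of_int k *\<^sub>R axis r 1) = Y (x, \<theta>)"
proof (induction k arbitrary: \<theta> rule: int_induct[where k=0])
  case base
  then show ?case by simp
next
  case (step1 i)
  have "Y (x, \<theta> + of_int (i + 1) *\<^sub>R axis r 1) = Y (x, (\<theta> + of_int i *\<^sub>R axis r 1) + axis r 1)"
    by (simp add: algebra_simps)
  then show ?case using assms step1.IH unfolding torus_periodic_def by simp
next
  case (step2 i)
  have "Y (x, \<theta> + of_int (i - 1) *\<^sub>R axis r 1) = Y (x, (\<theta> + of_int (i - 1) *\<^sub>R axis r 1) + axis r 1)"
    using assms unfolding torus_periodic_def by simp
  also have "\<dots> = Y (x, \<theta> + of_int i *\<^sub>R axis r 1)"
    by (simp add: algebra_simps)
  finally show ?case using step2.IH by simp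
qed

lemma torus_periodic_int_vec:
  fixes Y :: "('k::finite, 'n::finite) vf"
  assumes Y: "torus_periodic Y" and m: "int_vec m"
  shows "Y (x, \<theta> + m) = Y (x, \<theta>)"
proof -
  have "Y (x, \<theta> + (\<Sum>r\<in>S. m $ r *\<^sub>R axis r 1)) = Y (x, \<theta>)" for S \<theta>
    using finite[of S]
  proof (induction S arbitrary: \<theta> rule: finite_induct)
    case empty
    then show ?case by simp
  next
    case (insert r S)
    obtain k where k: "m $ r = of_int k" using m unfolding int_vec_def by (blast elim: Ints_cases)
    have "Y (x, \<theta> + (\<Sum>r\<in>insert r S. m $ r *\<^sub>R axis r 1))
        = Y (x, (\<theta> + (\<Sum>r\<in>S. m $ r *\<^sub>R axis r 1)) + of_int k *\<^sub>R axis r 1)"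
      using insert k by (simp add: algebra_simps)
    also have "\<dots> = Y (x, \<theta>)"
      using torus_periodic_int_multiple[OF Y] insert.IH by simp
    finally show ?case .
  qed
  then have "Y (x, \<theta> + (\<Sum>r\<in>UNIV. m $ r *\<^sub>R axis r 1)) = Y (x, \<theta>)" .
  then show ?thesis
    using basis_expansion[of m] by (simp only: scalar_mult_eq_scaleR)
qed

lemma torus_periodic_int_vec_diff:
  fixes Y :: "('k::finite, 'n::finite) vf"
  assumes "torus_periodic Y" and "int_vec m"
  shows "Y (x, \<theta> - m) = Y (x, \<theta>)"
  using torus_periodic_int_vec[OF assms(1) int_vec_uminus[OF assms(2)]] by simp

section \<open>Smooth functions\<close>

lemma smooth_fun_differentiable: "smooth_fun f \<Longrightarrow> f differentiable (at x)"
  by (erule smooth_fun.cases) auto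

lemma smooth_fun_partial:
  "smooth_fun f \<Longrightarrow> i \<in> Basis \<Longrightarrow> smooth_fun (\<lambda>x. frechet_derivative f (at x) i)"
  by (erule smooth_fun.cases) auto

lemma smooth_fun_affine:
  fixes l :: "'a::euclidean_space \<Rightarrow> real"
  assumes "linear l"
  shows "smooth_fun (\<lambda>p. l p + c)"
proof -
  define A where "A = (\<lambda>f::'a \<Rightarrow> real. \<exists>l c. linear l \<and> f = (\<lambda>p. l p + c))"
  have "A (\<lambda>p. l p + c)" using assms unfolding A_def by blast
  then show ?thesis
  proof (rule smooth_fun.coinduct[of A])
    fix f assume "A f"
    then obtain l c where lc: "linear l" "f = (\<lambda>p. l p + c)" unfolding A_def by blast
    have d: "(f has_derivative l) (at x)" for x
      unfolding lc(2) by (intro has_derivative_add_const linear_imp_has_derivative lc(1))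
    then have "frechet_derivative f (at x) = l" for x
      by (simp add: frechet_derivative_at[symmetric])
    then have "\<forall>i\<in>Basis. A (\<lambda>x. frechet_derivative f (at x) i)"
      unfolding A_def by (auto intro!: exI[of _ "\<lambda>_. 0"] simp: linear_zero)
    with d show "\<exists>f'. f = f' \<and> (\<forall>x. f' differentiable at x) \<and>
        (\<forall>i\<in>Basis. A (\<lambda>x. frechet_derivative f' (at x) i) \<or>
           smooth_fun (\<lambda>x. frechet_derivative f' (at x) i))"
      by (auto simp: differentiable_def)
  qed
qed

lemma smooth_map_differentiable:
  fixes Y :: "'a::euclidean_space \<Rightarrow> 'b::euclidean_space"
  assumes "smooth_map Y"
  shows "Y differentiable (at p)"
proof -
  have "(\<lambda>p. \<Sum>b\<in>Basis. (Y p \<bullet> b) *\<^sub>R b) differentiable (at p)"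
    using assms unfolding smooth_map_def
    by (intro differentiable_sum) (auto intro!: differentiable_scaleR smooth_fun_differentiable)
  then show ?thesis by (simp add: euclidean_representation)
qed

lemma smooth_fun_isCont_directional_derivative:
  fixes g :: "'a::euclidean_space \<Rightarrow> real"
  assumes "smooth_fun g"
  shows "isCont (\<lambda>p. frechet_derivative g (at p) h) q"
proof -
  have "frechet_derivative g (at p) h = (\<Sum>i\<in>Basis. (h \<bullet> i) * frechet_derivative g (at p) i)" for p
  proof -
    have lin: "linear (frechet_derivative g (at p))"
      by (rule linear_frechet_derivative[OF smooth_fun_differentiable[OF assms]])
    have "frechet_derivative g (at p) h = frechet_derivative g (at p) (\<Sum>i\<in>Basis. (h \<bullet> i) *\<^sub>R i)"
      by (simp add: euclidean_representation)
    then show ?thesis by (simp add: linear_sum[OF lin] linear_scale[OF lin])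
  qed
  moreover have "isCont (\<lambda>p. frechet_derivative g (at p) i) q" if "i \<in> Basis" for i
    using smooth_fun_differentiable[OF smooth_fun_partial[OF assms that]]
    by (rule differentiable_imp_continuous_within)
  ultimately show ?thesis by (simp add: continuous_intros)
qed

lemma has_real_derivative_along_line:
  fixes g :: "'a::real_normed_vector \<Rightarrow> real"
  assumes "g differentiable (at (p + s *\<^sub>R v))"
  shows "((\<lambda>s. g (p + s *\<^sub>R v)) has_real_derivative frechet_derivative g (at (p + s *\<^sub>R v)) v) (at s)"
proof -
  let ?D = "frechet_derivative g (at (p + s *\<^sub>R v))"
  have g: "(g has_derivative ?D) (at (p + s *\<^sub>R v))"
    using assms frechet_derivative_works by blast
  have "((\<lambda>s. p + s *\<^sub>R v) has_derivative (\<lambda>h. h *\<^sub>R v)) (at s)"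
    by (auto intro!: derivative_eq_intros)
  from diff_chain_at[OF this g] have "((\<lambda>s. g (p + s *\<^sub>R v)) has_derivative (\<lambda>h. ?D (h *\<^sub>R v))) (at s)"
    by (simp add: o_def)
  moreover have "(\<lambda>h. ?D (h *\<^sub>R v)) = (*) (?D v)"
    using linear_scale[OF has_derivative_linear[OF g]] by (auto simp: mult.commute)
  ultimately show ?thesis by (simp only: has_field_derivative_def)
qed

section \<open>The fields (M x, w)\<close>

definition affine_vf :: "real^'k^'k \<Rightarrow> real^'n \<Rightarrow> ('k::finite, 'n::finite) vf" where
  "affine_vf M w = (\<lambda>p. (M *v fst p, w))"

lemma Xfield_eq_affine_vf: "Xfield a = affine_vf (mat 1) a"
  by (auto simp: Xfield_def affine_vf_def)

lemma affine_vf_has_derivative: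
  fixes M :: "real^'k::finite^'k" and w :: "real^'n::finite"
  shows "(affine_vf M w has_derivative (\<lambda>h. (M *v fst h, 0))) (at p)"
proof -
  have "linear (\<lambda>h::('k, 'n) pt. (M *v fst h, 0::real^'n))"
    by (auto simp: linear_iff matrix_vector_right_distrib matrix_vector_mult_scaleR)
  then have "((\<lambda>h. (M *v fst h, 0) + (0, w)) has_derivative (\<lambda>h. (M *v fst h, 0))) (at p)"
    by (intro has_derivative_add_const linear_imp_has_derivative)
  then show ?thesis by (simp add: affine_vf_def)
qed

lemma frechet_derivative_affine_vf:
  "frechet_derivative (affine_vf M w) (at p) = (\<lambda>h. (M *v fst h, 0))"
  by (rule frechet_derivative_at[OF affine_vf_has_derivative, symmetric])

lemma lie_bracket_affine_vf:
  "lie_bracket (affine_vf A u) (affine_vf B w) = affine_vf (B ** A - A ** B) 0"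
  by (rule ext, simp only: lie_bracket_def frechet_derivative_affine_vf)
    (simp add: affine_vf_def matrix_vector_mul_assoc matrix_vector_mult_diff_rdistrib)

lemma smooth_vf_affine_vf:
  fixes M :: "real^'k::finite^'k" and w :: "real^'n::finite"
  shows "smooth_vf (affine_vf M w)"
  unfolding smooth_vf_def smooth_map_def
proof (intro conjI ballI)
  fix b :: "('k, 'n) pt"
  have lin: "linear (\<lambda>p::('k, 'n) pt. (M *v fst p, 0::real^'n) \<bullet> b)"
    by (auto simp: linear_iff inner_prod_def inner_add_left matrix_vector_right_distrib
        matrix_vector_mult_scaleR)
  have "smooth_fun (\<lambda>p::('k, 'n) pt. (M *v fst p, 0::real^'n) \<bullet> b + (0, w) \<bullet> b)"
    by (rule smooth_fun_affine[OF lin])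
  then show "smooth_fun (\<lambda>p. affine_vf M w p \<bullet> b)"
    by (simp add: affine_vf_def inner_prod_def)
qed (simp add: torus_periodic_def affine_vf_def)

lemma affine_vf_in_LX: "affine_vf M w \<in> LX a"
  by (simp add: LX_def smooth_vf_affine_vf Xfield_eq_affine_vf lie_bracket_affine_vf)
    (simp add: affine_vf_def zero_prod_def)

lemma affine_vf_eq_0_iff: "affine_vf M w = (\<lambda>p. 0) \<longleftrightarrow> M = 0 \<and> w = 0"
  by (auto simp: affine_vf_def fun_eq_iff zero_prod_def matrix_eq)

lemma lin_comb_eq_affine_vf:
  fixes c :: "('k::finite \<times> 'k) + 'n::finite \<Rightarrow> real"
  shows "lin_comb c = affine_vf (\<chi> l j. c (Inl (j, l))) (\<chi> r. c (Inr r))"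
proof (rule ext)
  fix p :: "('k, 'n) pt"
  obtain x \<theta> where p: "p = (x, \<theta>)" by (cases p)
  have "lin_comb c p = (\<Sum>jl\<in>UNIV. c (Inl jl) *\<^sub>R basis_vf (Inl jl) p) + (\<Sum>r\<in>UNIV. c (Inr r) *\<^sub>R basis_vf (Inr r) p)"
    unfolding lin_comb_def by (subst UNIV_Plus_UNIV[symmetric], subst sum.Plus) (auto simp: o_def)
  also have "\<dots> = ((\<Sum>(j, l)\<in>UNIV. c (Inl (j, l)) *\<^sub>R axis l (x $ j)), \<Sum>r\<in>UNIV. c (Inr r) *\<^sub>R axis r 1)"
  proof -
    have "basis_vf (Inl jl) p = (axis (snd jl) (x $ fst jl), 0)" for jl
      by (cases jl) (simp add: p)
    then show ?thesis by (simp add: p sum_prod case_prod_unfold)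
  qed
  also have "\<dots> = affine_vf (\<chi> l j. c (Inl (j, l))) (\<chi> r. c (Inr r)) p"
    by (simp add: p affine_vf_def vec_eq_iff sum_component axis_def matrix_vector_mult_def
        sum.cartesian_product[of _ UNIV UNIV, unfolded UNIV_Times_UNIV, symmetric]
        if_distrib mult.commute cong: if_cong)
  finally show "lin_comb c p = affine_vf (\<chi> l j. c (Inl (j, l))) (\<chi> r. c (Inr r)) p" .
qed

lemma affine_vf_in_range_lin_comb: "affine_vf M w \<in> range lin_comb"
proof -
  have "affine_vf M w = lin_comb (case_sum (\<lambda>(j, l). M $ l $ j) (($) w))"
    by (simp add: lin_comb_eq_affine_vf)
  then show ?thesis by (simp only: rangeI)
qed

lemma lin_comb_eq_0:
  assumes "lin_comb c = (\<lambda>p. 0)"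
  shows "c i = 0"
proof -
  have "(\<chi> l j. c (Inl (j, l))) = 0" "(\<chi> r. c (Inr r)) = 0"
    using assms by (simp_all add: lin_comb_eq_affine_vf affine_vf_eq_0_iff)
  then show ?thesis by (cases i) (auto simp: vec_eq_iff)
qed

lemma inj_basis_vf: "inj basis_vf"
proof (rule injI, rule ccontr)
  fix i j :: "('k::finite \<times> 'k) + 'n::finite"
  assume eq: "basis_vf i = basis_vf j" and "i \<noteq> j"
  define c where "c = (\<lambda>k. (if k = i then 1 else 0) - (if k = j then 1 else 0 :: real))"
  have "c k *\<^sub>R v = (if k = i then v else 0) - (if k = j then v else 0)" for k and v :: "('k, 'n) pt"
    by (simp add: c_def scaleR_left_diff_distrib)
  then have "lin_comb c = (\<lambda>p. basis_vf i p - basis_vf j p)"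
    by (simp add: lin_comb_def fun_eq_iff sum_subtractf)
  then have "c i = 0" using eq by (intro lin_comb_eq_0) simp
  with \<open>i \<noteq> j\<close> show False by (simp add: c_def)
qed

lemma lin_comb_linear_combination:
  "(\<lambda>p. s *\<^sub>R lin_comb c p + t *\<^sub>R lin_comb d p) = lin_comb (\<lambda>i. s * c i + t * d i)"
  by (simp add: lin_comb_def fun_eq_iff scaleR_add_left sum.distrib scaleR_sum_right)

lemma lie_bracket_lin_comb: "lie_bracket (lin_comb c) (lin_comb d) \<in> range lin_comb"
  by (simp only: lin_comb_eq_affine_vf[of c] lin_comb_eq_affine_vf[of d] lie_bracket_affine_vf
      affine_vf_in_range_lin_comb)

section \<open>The centralizer of X\<close>

lemma frechet_derivative_Xfield: "frechet_derivative (Xfield a) (at p) = (\<lambda>h. (fst h, 0))"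
  by (simp add: Xfield_eq_affine_vf frechet_derivative_affine_vf)

lemma LX_D:
  fixes Y :: "('k::finite, 'n::finite) vf"
  assumes "Y \<in> LX a"
  shows "smooth_map Y" "torus_periodic Y" "isCont Y p"
    and "frechet_derivative Y (at p) (Xfield a p) = (fst (Y p), 0)"
proof -
  show smooth: "smooth_map Y" and "torus_periodic Y"
    using assms by (auto simp: LX_def smooth_vf_def)
  show "isCont Y p"
    by (rule differentiable_imp_continuous_within[OF smooth_map_differentiable[OF smooth]])
  have "lie_bracket (Xfield a) Y p = 0"
    using assms by (simp add: LX_def)
  then show "frechet_derivative Y (at p) (Xfield a p) = (fst (Y p), 0)"
    by (simp add: lie_bracket_def frechet_derivative_Xfield)
qed

lemma LX_isCont_slice:
  fixes Y :: "('k::finite, 'n::finite) vf"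
  assumes "Y \<in> LX a"
  shows "isCont (\<lambda>\<theta>. Y (x, \<theta>)) \<theta>"
  by (rule isCont_o2[where f="\<lambda>\<theta>. (x, \<theta>)" and g=Y]) (auto intro!: continuous_intros LX_D(3)[OF assms])

lemma LX_flow_equivariant:
  fixes Y :: "('k::finite, 'n::finite) vf"
  assumes Y: "Y \<in> LX a"
  shows "Y (exp t *\<^sub>R x, \<theta> + t *\<^sub>R a) = (exp t *\<^sub>R fst (Y (x, \<theta>)), snd (Y (x, \<theta>)))"
proof -
  define y where "y = (\<lambda>t. Y (exp t *\<^sub>R x, \<theta> + t *\<^sub>R a))"
  have y': "(y has_derivative (\<lambda>h. h *\<^sub>R (fst (y s), 0))) (at s)" for s
  proof -
    let ?p = "(exp s *\<^sub>R x, \<theta> + s *\<^sub>R a)"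
    let ?D = "frechet_derivative Y (at ?p)"
    have "((\<lambda>t. (exp t *\<^sub>R x, \<theta> + t *\<^sub>R a)) has_derivative (\<lambda>h. h *\<^sub>R Xfield a ?p)) (at s)"
      by (auto intro!: derivative_eq_intros simp: Xfield_def)
    moreover have DY: "(Y has_derivative ?D) (at ?p)"
      using smooth_map_differentiable[OF LX_D(1)[OF Y]] frechet_derivative_works by blast
    ultimately have "(y has_derivative (\<lambda>h. ?D (h *\<^sub>R Xfield a ?p))) (at s)"
      unfolding y_def using diff_chain_at by (fastforce simp: o_def)
    moreover have "?D (h *\<^sub>R Xfield a ?p) = h *\<^sub>R (fst (y s), 0)" for h
      using linear_scale[OF has_derivative_linear[OF DY]] LX_D(4)[OF Y, of ?p] by (simp add: y_def)
    ultimately show ?thesis by simp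
  qed
  define z where "z = (\<lambda>t. (exp (- t) *\<^sub>R fst (y t), snd (y t)))"
  have "(z has_derivative (\<lambda>h. 0)) (at s)" for s
  proof -
    have fst': "((\<lambda>t. fst (y t)) has_derivative (\<lambda>h. h *\<^sub>R fst (y s))) (at s)"
      using has_derivative_fst[OF y'] by simp
    have snd': "((\<lambda>t. snd (y t)) has_derivative (\<lambda>h. 0)) (at s)"
      using has_derivative_snd[OF y'] by simp
    have "((\<lambda>t. exp (- t)) has_derivative (\<lambda>h. h * (- exp (- s)))) (at s)"
      by (auto intro!: derivative_eq_intros)
    from has_derivative_scaleR[OF this fst'] have "((\<lambda>t. exp (- t) *\<^sub>R fst (y t)) has_derivative (\<lambda>h. 0)) (at s)"
      by (simp add: algebra_simps)
    then show ?thesis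
      unfolding z_def using has_derivative_Pair[OF _ snd'] by (simp add: zero_prod_def)
  qed
  then have "z t = z 0"
    using has_derivative_zero_constant[of UNIV z] by (metis UNIV_I convex_UNIV)
  then have "exp (- t) *\<^sub>R fst (y t) = fst (y 0)" "snd (y t) = snd (y 0)"
    by (auto simp: z_def prod_eq_iff)
  moreover have "fst (y t) = exp t *\<^sub>R (exp (- t) *\<^sub>R fst (y t))"
    by (simp add: scaleR_scaleR exp_minus_inverse)
  ultimately show ?thesis
    by (simp add: y_def prod_eq_iff)
qed

lemma LX_fst_zero_section:
  fixes Y :: "('k::finite, 'n::finite) vf"
  assumes Y: "Y \<in> LX a"
  shows "fst (Y (0, \<theta>)) = 0"
proof (rule ccontr)
  define v where "v = fst (Y (0, \<theta>))"
  assume "fst (Y (0, \<theta>)) \<noteq> 0"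
  then have v: "norm v > 0" by (simp add: v_def)
  then obtain \<delta> where \<delta>: "\<delta> > 0" "\<And>p. dist p (0, \<theta>) < \<delta> \<Longrightarrow> dist (Y p) (Y (0, \<theta>)) < norm v"
    using LX_D(3)[OF Y, of "(0, \<theta>)"] unfolding continuous_at_eps_delta by blast
  obtain t m where tm: "t > 1" "int_vec m" "norm (t *\<^sub>R a - m) < \<delta>"
    using linear_flow_returns_after[OF \<delta>(1)] by blast
  have "Y (0, \<theta> + t *\<^sub>R a - m) = Y (0, \<theta> + t *\<^sub>R a)"
    using torus_periodic_int_vec_diff[OF LX_D(2)[OF Y] tm(2)] by simp
  also have "\<dots> = (exp t *\<^sub>R v, snd (Y (0, \<theta>)))"
    using LX_flow_equivariant[OF Y, of t 0 \<theta>] by (simp add: v_def)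
  finally have "Y (0, \<theta> + t *\<^sub>R a - m) = (exp t *\<^sub>R v, snd (Y (0, \<theta>)))" .
  then have "dist (exp t *\<^sub>R v) v \<le> dist (Y (0, \<theta> + t *\<^sub>R a - m)) (Y (0, \<theta>))"
    using dist_fst_le[of "Y (0, \<theta> + t *\<^sub>R a - m)" "Y (0, \<theta>)"] by (simp add: v_def)
  moreover have "dist (0, \<theta> + t *\<^sub>R a - m) (0::real^'k, \<theta>) < \<delta>"
    using tm(3) by (simp add: dist_Pair_Pair dist_norm)
  ultimately have "dist (exp t *\<^sub>R v) v < norm v" using \<delta>(2) by fastforce
  moreover have "dist (exp t *\<^sub>R v) v = (exp t - 1) * norm v"
  proof -
    have "exp t *\<^sub>R v - v = (exp t - 1) *\<^sub>R v" by (simp add: algebra_simps)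
    moreover have "exp t \<ge> 1" using tm(1) by simp
    ultimately show ?thesis by (simp add: dist_norm)
  qed
  moreover have "exp t - 1 > 1" using exp_ge_add_one_self[of t] tm(1) by linarith
  ultimately show False using v by simp
qed

lemma LX_fst_component_smooth:
  fixes Y :: "('k::finite, 'n::finite) vf"
  assumes "Y \<in> LX a" and "b \<in> Basis"
  shows "smooth_fun (\<lambda>p. Y p \<bullet> (b, 0))"
  using LX_D(1)[OF assms(1)] assms(2) by (auto simp: smooth_map_def Basis_prod_def)

lemma LX_fst_inner_eq_derivative:
  fixes Y :: "('k::finite, 'n::finite) vf"
  assumes Y: "Y \<in> LX a" and b: "b \<in> Basis"
  shows "fst (Y (x, \<theta>)) \<bullet> b = frechet_derivative (\<lambda>p. Y p \<bullet> (b, 0)) (at (0, \<theta>)) (x, 0)"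
proof -
  define g where "g = (\<lambda>p. Y p \<bullet> (b, 0))"
  have g: "smooth_fun g" unfolding g_def by (rule LX_fst_component_smooth[OF Y b])
  have g_eq: "g p = fst (Y p) \<bullet> b" for p
    by (simp add: g_def inner_prod_def)
  show ?thesis
    unfolding g_def[symmetric]
  proof (rule isCont_eq_if_attained_nearby[OF smooth_fun_isCont_directional_derivative[OF g]])
    fix \<delta> :: real assume "\<delta> > 0"
    then obtain t m where tm: "int_vec m"
      "\<forall>s\<in>{0..exp t}. dist (s *\<^sub>R x, \<theta> + t *\<^sub>R a - m) (0, \<theta>) < \<delta>"
      using linear_flow_return_near_zero_section by blast
    define \<theta>' where "\<theta>' = \<theta> + t *\<^sub>R a - m"
    have "((\<lambda>s. g ((0, \<theta>') + s *\<^sub>R (x, 0))) has_real_derivative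
          frechet_derivative g (at ((0, \<theta>') + s *\<^sub>R (x, 0))) (x, 0)) (at s)"
      if "0 \<le> s" "s \<le> exp t" for s
      by (rule has_real_derivative_along_line[OF smooth_fun_differentiable[OF g]])
    from MVT2[OF exp_gt_zero this] obtain z where z: "0 < z" "z < exp t"
      "g ((0, \<theta>') + exp t *\<^sub>R (x, 0)) - g ((0, \<theta>') + 0 *\<^sub>R (x, 0))
        = (exp t - 0) * frechet_derivative g (at ((0, \<theta>') + z *\<^sub>R (x, 0))) (x, 0)"
      by blast
    have "g (exp t *\<^sub>R x, \<theta>') = g (exp t *\<^sub>R x, \<theta> + t *\<^sub>R a)"
      using torus_periodic_int_vec_diff[OF LX_D(2)[OF Y] tm(1)] by (simp add: g_def \<theta>'_def)
    also have "\<dots> = exp t * (fst (Y (x, \<theta>)) \<bullet> b)"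
      using LX_flow_equivariant[OF Y, of t x \<theta>] by (simp add: g_eq)
    finally have "fst (Y (x, \<theta>)) \<bullet> b = frechet_derivative g (at (z *\<^sub>R x, \<theta>')) (x, 0)"
      using z(3) LX_fst_zero_section[OF Y, of \<theta>'] by (simp add: g_eq)
    moreover have "dist (z *\<^sub>R x, \<theta>') (0, \<theta>) < \<delta>"
      using tm(2) z(1,2) by (simp add: \<theta>'_def)
    ultimately show "\<exists>p. dist p (0, \<theta>) < \<delta> \<and> frechet_derivative g (at p) (x, 0) = fst (Y (x, \<theta>)) \<bullet> b"
      by metis
  qed
qed

lemma LX_fst_linear:
  fixes Y :: "('k::finite, 'n::finite) vf"
  assumes Y: "Y \<in> LX a"
  shows "linear (\<lambda>x. fst (Y (x, \<theta>)))"
proof (rule linear_componentwise_iff[THEN iffD2], intro ballI)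
  fix b :: "real^'k" assume b: "b \<in> Basis"
  let ?D = "frechet_derivative (\<lambda>p. Y p \<bullet> (b, 0)) (at (0, \<theta>))"
  have "linear ?D"
    by (rule linear_frechet_derivative[OF smooth_fun_differentiable[OF LX_fst_component_smooth[OF Y b]]])
  moreover have "linear (\<lambda>x::real^'k. (x, 0::real^'n))"
    by (simp add: linear_iff)
  ultimately have "linear (\<lambda>x. ?D (x, 0))"
    using linear_compose[of "\<lambda>x::real^'k. (x, 0::real^'n)" ?D] by (simp add: o_def)
  then show "linear (\<lambda>x. fst (Y (x, \<theta>)) \<bullet> b)"
    unfolding LX_fst_inner_eq_derivative[OF Y b] .
qed

lemma LX_fst_independent_of_angle:
  fixes Y :: "('k::finite, 'n::finite) vf"
  assumes ri: "rationally_independent a" and Y: "Y \<in> LX a"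
  shows "fst (Y (x, \<theta>)) = fst (Y (x, 0))"
proof (rule linear_flow_invariant_const[OF ri, where f="\<lambda>\<theta>. fst (Y (x, \<theta>))"])
  show "isCont (\<lambda>\<theta>. fst (Y (x, \<theta>))) \<theta>" for \<theta>
    using LX_isCont_slice[OF Y] by (rule isCont_fst)
  show "fst (Y (x, \<theta> - m)) = fst (Y (x, \<theta>))" if "int_vec m" for \<theta> m
    using torus_periodic_int_vec_diff[OF LX_D(2)[OF Y] that] by simp
  show "fst (Y (x, \<theta> + t *\<^sub>R a)) = fst (Y (x, \<theta>))" for \<theta> t
  proof -
    have "exp t *\<^sub>R fst (Y (x, \<theta> + t *\<^sub>R a)) = fst (Y (exp t *\<^sub>R x, \<theta> + t *\<^sub>R a))"
      using linear_scale[OF LX_fst_linear[OF Y]] by simp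
    also have "\<dots> = exp t *\<^sub>R fst (Y (x, \<theta>))"
      using LX_flow_equivariant[OF Y] by simp
    finally show ?thesis by simp
  qed
qed

lemma LX_snd_independent_of_x:
  fixes Y :: "('k::finite, 'n::finite) vf"
  assumes Y: "Y \<in> LX a"
  shows "snd (Y (x, \<theta>)) = snd (Y (0, \<theta>))"
proof (rule isCont_eq_if_attained_nearby[where f="\<lambda>p. snd (Y p)"])
  show "isCont (\<lambda>p. snd (Y p)) (0, \<theta>)"
    using LX_D(3)[OF Y] by (rule isCont_snd)
  fix \<delta> :: real assume "\<delta> > 0"
  then obtain t m where tm: "int_vec m"
    "\<forall>s\<in>{0..exp t}. dist (s *\<^sub>R x, \<theta> + t *\<^sub>R a - m) (0, \<theta>) < \<delta>"
    using linear_flow_return_near_zero_section by blast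
  have "snd (Y (exp t *\<^sub>R x, \<theta> + t *\<^sub>R a - m)) = snd (Y (exp t *\<^sub>R x, \<theta> + t *\<^sub>R a))"
    using torus_periodic_int_vec_diff[OF LX_D(2)[OF Y] tm(1)] by simp
  also have "\<dots> = snd (Y (x, \<theta>))"
    using LX_flow_equivariant[OF Y] by simp
  finally show "\<exists>p. dist p (0, \<theta>) < \<delta> \<and> snd (Y p) = snd (Y (x, \<theta>))"
    using tm(2) by fastforce
qed

lemma LX_snd_independent_of_angle:
  fixes Y :: "('k::finite, 'n::finite) vf"
  assumes ri: "rationally_independent a" and Y: "Y \<in> LX a"
  shows "snd (Y (0, \<theta>)) = snd (Y (0, 0))"
proof (rule linear_flow_invariant_const[OF ri, where f="\<lambda>\<theta>. snd (Y (0, \<theta>))"])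
  show "isCont (\<lambda>\<theta>. snd (Y (0, \<theta>))) \<theta>" for \<theta>
    using LX_isCont_slice[OF Y] by (rule isCont_snd)
  show "snd (Y (0, \<theta> - m)) = snd (Y (0, \<theta>))" if "int_vec m" for \<theta> m
    using torus_periodic_int_vec_diff[OF LX_D(2)[OF Y] that] by simp
  show "snd (Y (0, \<theta> + t *\<^sub>R a)) = snd (Y (0, \<theta>))" for \<theta> t
    using LX_flow_equivariant[OF Y, of t 0 \<theta>] by simp
qed

lemma LX_eq_affine_vf:
  fixes Y :: "('k::finite, 'n::finite) vf"
  assumes ri: "rationally_independent a" and Y: "Y \<in> LX a"
  shows "Y = affine_vf (matrix (\<lambda>x. fst (Y (x, 0)))) (snd (Y (0, 0)))"
proof
  fix p :: "('k, 'n) pt"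
  obtain x \<theta> where p: "p = (x, \<theta>)" by (cases p)
  have "fst (Y p) = matrix (\<lambda>x. fst (Y (x, 0))) *v x"
    using LX_fst_linear[OF Y] LX_fst_independent_of_angle[OF ri Y] by (simp add: p matrix_works)
  moreover have "snd (Y p) = snd (Y (0, 0))"
    unfolding p using LX_snd_independent_of_x[OF Y, of x \<theta>] LX_snd_independent_of_angle[OF ri Y, of \<theta>]
    by (rule trans)
  ultimately show "Y p = affine_vf (matrix (\<lambda>x. fst (Y (x, 0)))) (snd (Y (0, 0))) p"
    by (simp add: affine_vf_def p prod_eq_iff)
qed

lemma LX_eq_range_lin_comb:
  assumes "rationally_independent a"
  shows "LX a = range lin_comb"
proof
  show "LX a \<subseteq> range lin_comb"
  proof
    fix Y assume "Y \<in> LX a"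
    then have "Y = affine_vf (matrix (\<lambda>x. fst (Y (x, 0)))) (snd (Y (0, 0)))"
      by (rule LX_eq_affine_vf[OF assms])
    then show "Y \<in> range lin_comb"
      by (rule ssubst) (rule affine_vf_in_range_lin_comb)
  qed
  show "range lin_comb \<subseteq> LX a"
    by (auto simp: lin_comb_eq_affine_vf affine_vf_in_LX)
qed

theorem lemma2p2:
  fixes a :: "real^'n"
  assumes "rationally_independent a"
  shows "(\<forall>Y::('k::finite, 'n) vf. Y \<in> LX a \<longleftrightarrow> (\<exists>c. Y = lin_comb c))
    \<and> (\<forall>c. lin_comb c = (\<lambda>p::('k, 'n) pt. 0) \<longrightarrow> (\<forall>i. c i = 0))
    \<and> inj (basis_vf :: _ \<Rightarrow> ('k, 'n) vf)
    \<and> card (range (basis_vf :: _ \<Rightarrow> ('k, 'n) vf)) = CARD('k)^2 + CARD('n)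
    \<and> (\<forall>Y\<in>LX a. \<forall>Z\<in>LX a. \<forall>s t. (\<lambda>p. s *\<^sub>R Y p + t *\<^sub>R Z p) \<in> (LX a :: ('k, 'n) vf set)
          \<and> lie_bracket Y Z \<in> LX a)"
proof (intro conjI allI ballI impI)
  have LX: "LX a = (range lin_comb :: ('k, 'n) vf set)"
    by (rule LX_eq_range_lin_comb[OF assms])
  show "Y \<in> LX a \<longleftrightarrow> (\<exists>c. Y = lin_comb c)" for Y :: "('k, 'n) vf"
    unfolding LX by blast
  show "c i = 0" if "lin_comb c = (\<lambda>p::('k, 'n) pt. 0)" for c i
    using that by (rule lin_comb_eq_0)
  show inj: "inj (basis_vf :: _ \<Rightarrow> ('k, 'n) vf)"
    by (rule inj_basis_vf)
  show "card (range (basis_vf :: _ \<Rightarrow> ('k, 'n) vf)) = CARD('k)^2 + CARD('n)"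
    using card_image[OF inj] by (simp add: card_sum card_prod power2_eq_square)
  fix Y Z :: "('k, 'n) vf" and s t :: real
  assume "Y \<in> LX a" "Z \<in> LX a"
  then obtain c d where "Y = lin_comb c" "Z = lin_comb d"
    unfolding LX by blast
  then show "(\<lambda>p. s *\<^sub>R Y p + t *\<^sub>R Z p) \<in> LX a" and "lie_bracket Y Z \<in> LX a"
    unfolding LX by (simp_all only: lin_comb_linear_combination lie_bracket_lin_comb rangeI)
qed

end
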